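(* Let $0<3x_0<L$, $\mu>0$, and $\mu_0=-\frac{x_0}{L+x_0}+2\sqrt{\frac{x_0}{L+x_0}}$. Consider $$(r\ddot u)''+\mu(q\dot u)'+pu=0\quad\text{on }(0,2L).\qquad(\ast)$$ (i) If $\mu<\mu_0$, every solution of $(\ast)$ is a linear combination of $\cos\alpha\theta\sinh\beta\theta$, $\sin\alpha\theta\cosh\beta\theta$, $\sin\alpha\theta\sinh\beta\theta$, $\cos\alpha\theta\cosh\beta\theta$, where $\alpha=\frac12\sqrt{\mu+\frac{x_0}{L+x_0}+2\sqrt{\frac{x_0}{L+x_0}}}$ and $\beta=\frac12\sqrt{-\mu-\frac{x_0}{L+x_0}+2\sqrt{\frac{x_0}{L+x_0}}}$. (ii) If $\mu=\mu_0$, every solution of $(\ast)$ is a linear combination of $\sin\alpha\theta$, $\cos\alpha\theta$, $\theta\sin\alpha\theta$, $\theta\cos\alpha\theta$ (with $\alpha$ as in (i)). (iii) If $\mu>\mu_0$, every solution of $(\ast)$ is a linear combination of $\sin(\alpha-\gamma)\theta$, $\sin(\alpha+\gamma)\theta$, $\cos(\alpha-\gamma)\theta$, $\cos(\alpha+\gamma)\theta$, with $\alpha$ as in (i) and $\gamma=\frac12\sqrt{\mu+\frac{x_0}{L+x_0}-2\sqrt{\frac{x_0}{L+x_0}}}$. In each case the four functions are linearly independent.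
   Context: $\sigma=\pi\sqrt{x_0/(L+x_0)}$, $k=L/\sin\sigma$, $\lambda=\frac{2L}{L+x_0}$, $H(s)=\frac{\pi}{\sigma\sqrt{k^2-(s-L)^2}}$ for $s\in[0,2L]$ (the curvature of the critical curve $\gamma(x_0,L)$), $\theta(s)=\int_0^sH(l)\,dl=\pi\big(1+\frac1\sigma\arcsin\frac{s-L}{k}\big)$, so $\theta(0)=0$, $\theta(2L)=2\pi$. Set $r=2/H^3$, $q=2/H$, $p=(2-\lambda)H$. Derivatives ($'$ and dots) are with respect to $s$; solutions are classical ($C^4$) solutions on $(0,2L)$. *)

theory Defs
  imports "HOL-Analysis.Analysis"
begin

definition sig :: "real \<Rightarrow> real \<Rightarrow> real" where
  "sig x0 L = pi * sqrt (x0 / (L + x0))"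

definition kk :: "real \<Rightarrow> real \<Rightarrow> real" where
  "kk x0 L = L / sin (sig x0 L)"

definition lam :: "real \<Rightarrow> real \<Rightarrow> real" where
  "lam x0 L = 2 * L / (L + x0)"

definition H :: "real \<Rightarrow> real \<Rightarrow> real \<Rightarrow> real" where
  "H x0 L s = pi / (sig x0 L * sqrt ((kk x0 L)^2 - (s - L)^2))"

text \<open>theta(s) = integral of H from 0 to s, in the closed form given in the paper.\<close>
definition theta :: "real \<Rightarrow> real \<Rightarrow> real \<Rightarrow> real" where
  "theta x0 L s = pi * (1 + arcsin ((s - L) / kk x0 L) / sig x0 L)"

definition rr :: "real \<Rightarrow> real \<Rightarrow> real \<Rightarrow> real" where
  "rr x0 L s = 2 / (H x0 L s)^3"

definition qq :: "real \<Rightarrow> real \<Rightarrow> real \<Rightarrow> real" where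
  "qq x0 L s = 2 / H x0 L s"

definition pp :: "real \<Rightarrow> real \<Rightarrow> real \<Rightarrow> real" where
  "pp x0 L s = (2 - lam x0 L) * H x0 L s"

definition mu0 :: "real \<Rightarrow> real \<Rightarrow> real" where
  "mu0 x0 L = - (x0 / (L + x0)) + 2 * sqrt (x0 / (L + x0))"

definition C4_on :: "real \<Rightarrow> real \<Rightarrow> (real \<Rightarrow> real) \<Rightarrow> bool" where
  "C4_on a b u \<longleftrightarrow>
     (\<forall>n<4. \<forall>s\<in>{a<..<b}. ((deriv ^^ n) u has_real_derivative (deriv ^^ Suc n) u s) (at s))
     \<and> continuous_on {a<..<b} ((deriv ^^ 4) u)"

definition is_solution :: "real \<Rightarrow> real \<Rightarrow> real \<Rightarrow> (real \<Rightarrow> real) \<Rightarrow> bool" where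
  "is_solution x0 L mu u \<longleftrightarrow> C4_on 0 (2*L) u \<and>
     (\<forall>s\<in>{0<..<2*L}.
        deriv (deriv (\<lambda>t. rr x0 L t * deriv (deriv u) t)) s
        + mu * deriv (\<lambda>t. qq x0 L t * deriv u t) s
        + pp x0 L s * u s = 0)"

definition general_solution_basis ::
  "real \<Rightarrow> real \<Rightarrow> real \<Rightarrow> (real \<Rightarrow> real) \<Rightarrow> (real \<Rightarrow> real) \<Rightarrow> (real \<Rightarrow> real) \<Rightarrow> (real \<Rightarrow> real) \<Rightarrow> bool"
where
  "general_solution_basis x0 L mu f1 f2 f3 f4 \<longleftrightarrow>
     (\<forall>u. is_solution x0 L mu u \<longrightarrow>
        (\<exists>c1 c2 c3 c4. \<forall>s\<in>{0<..<2*L}.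
           u s = c1 * f1 (theta x0 L s) + c2 * f2 (theta x0 L s)
               + c3 * f3 (theta x0 L s) + c4 * f4 (theta x0 L s)))
     \<and> (\<forall>c1 c2 c3 c4. (\<forall>s\<in>{0<..<2*L}.
           c1 * f1 (theta x0 L s) + c2 * f2 (theta x0 L s)
           + c3 * f3 (theta x0 L s) + c4 * f4 (theta x0 L s) = 0)
         \<longrightarrow> c1 = 0 \<and> c2 = 0 \<and> c3 = 0 \<and> c4 = 0)"

end

theory Submission
  imports Defs
begin

text \<open>Write \<open>a = x0 / (L + x0)\<close>. The curvature satisfies \<open>H' = a (s - L) H\<^sup>3\<close> and \<open>p = 2 a H\<close>, so in
  the variable \<open>\<theta>\<close>, where \<open>\<theta>' = H\<close>, the equation becomes the constant coefficient equation
  \<open>y'''' + (\<mu> + a) y'' + a y = 0\<close>. The roots of \<open>z\<^sup>4 + (\<mu> + a) z\<^sup>2 + a\<close> are \<open>\<plusminus>\<beta> \<plusminus> i \<alpha>\<close>,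
  the double roots \<open>\<plusminus>i \<alpha>\<close>, or \<open>\<plusminus>i (\<alpha> \<plusminus> \<gamma>)\<close>, according to the sign of \<open>\<mu> - \<mu>\<^sub>0\<close>.
  The Cauchy problem for the first-order system satisfied by the \<open>\<theta>\<close>-derivatives of order \<open>< 4\<close>
  has unique solutions (Gronwall's inequality for the sum of their squares), so four solutions whose
  Cauchy data at one point are linearly independent span all solutions; any Cauchy datum is attained,
  since an injective linear map of \<open>\<real>\<^sup>4\<close> to itself is onto.\<close>

section \<open>Companion systems\<close>

text \<open>\<open>Z j\<close> stands for the \<open>j\<close>-th derivative, with respect to a variable \<open>\<theta>\<close> with \<open>\<theta>' = h\<close>, of a
  solution of \<open>y'''' + A y'' + B y = 0\<close>.\<close>

definition companion_chain ::
  "real set \<Rightarrow> (real \<Rightarrow> real) \<Rightarrow> real \<Rightarrow> real \<Rightarrow> (nat \<Rightarrow> real \<Rightarrow> real) \<Rightarrow> bool" where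
  "companion_chain S h A B Z \<longleftrightarrow> (\<forall>s\<in>S.
     (\<forall>j<3. (Z j has_real_derivative h s * Z (Suc j) s) (at s)) \<and>
     (Z 3 has_real_derivative h s * (- A * Z 2 s - B * Z 0 s)) (at s))"

lemma companion_chainD:
  assumes "companion_chain S h A B Z" "s \<in> S"
  shows "j < 3 \<Longrightarrow> (Z j has_real_derivative h s * Z (Suc j) s) (at s)"
    and "(Z 3 has_real_derivative h s * (- A * Z 2 s - B * Z 0 s)) (at s)"
  using assms unfolding companion_chain_def by auto

lemma companion_chainI:
  assumes "\<And>s j. s \<in> S \<Longrightarrow> j < 3 \<Longrightarrow> (Z j has_real_derivative h s * Z (Suc j) s) (at s)"
    and "\<And>s. s \<in> S \<Longrightarrow> (Z 3 has_real_derivative h s * (- A * Z 2 s - B * Z 0 s)) (at s)"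
  shows "companion_chain S h A B Z"
  using assms unfolding companion_chain_def by auto

lemma companion_chain_lincomb:
  assumes Z: "companion_chain S h A B Z" and W: "companion_chain S h A B W"
  shows "companion_chain S h A B (\<lambda>j s. c * Z j s + d * W j s)"
proof (rule companion_chainI)
  fix s and j :: nat assume s: "s \<in> S" and j: "j < 3"
  show "((\<lambda>s. c * Z j s + d * W j s) has_real_derivative h s * (c * Z (Suc j) s + d * W (Suc j) s)) (at s)"
    using companion_chainD(1)[OF Z s j] companion_chainD(1)[OF W s j]
    by (auto intro!: derivative_eq_intros simp: algebra_simps)
next
  fix s assume s: "s \<in> S"
  show "((\<lambda>s. c * Z 3 s + d * W 3 s) has_real_derivative
      h s * (- A * (c * Z 2 s + d * W 2 s) - B * (c * Z 0 s + d * W 0 s))) (at s)"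
    using companion_chainD(2)[OF Z s] companion_chainD(2)[OF W s]
    by (auto intro!: derivative_eq_intros simp: algebra_simps)
qed

lemma companion_chain_compose:
  assumes F: "companion_chain UNIV (\<lambda>_. 1) A B F"
    and \<theta>: "\<And>s. s \<in> S \<Longrightarrow> (\<theta> has_real_derivative h s) (at s)"
  shows "companion_chain S h A B (\<lambda>j s. F j (\<theta> s))"
proof (rule companion_chainI)
  fix s and j :: nat assume s: "s \<in> S" and j: "j < 3"
  show "((\<lambda>s. F j (\<theta> s)) has_real_derivative h s * F (Suc j) (\<theta> s)) (at s)"
    using DERIV_chain2[OF companion_chainD(1)[OF F UNIV_I j] \<theta>[OF s]] by (simp add: mult.commute)
next
  fix s assume s: "s \<in> S"
  show "((\<lambda>s. F 3 (\<theta> s)) has_real_derivative h s * (- A * F 2 (\<theta> s) - B * F 0 (\<theta> s))) (at s)"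
    using DERIV_chain2[OF companion_chainD(2)[OF F UNIV_I] \<theta>[OF s]] by (simp add: mult.commute)
qed

lemma abs_mult_le_sum_squares: "2 * \<bar>x * y\<bar> \<le> x\<^sup>2 + y\<^sup>2" for x y :: real
  using sum_squares_bound[of "\<bar>x\<bar>" "\<bar>y\<bar>"] by (simp add: abs_mult)

lemma companion_energy_bound:
  fixes z0 z1 z2 z3 A B :: real
  shows "2 * \<bar>z0 * z1 + z1 * z2 + z2 * z3 + z3 * (- A * z2 - B * z0)\<bar>
    \<le> (3 + \<bar>A\<bar> + \<bar>B\<bar>) * (z0\<^sup>2 + z1\<^sup>2 + z2\<^sup>2 + z3\<^sup>2)"
proof -
  have a: "2 * \<bar>A * (z2 * z3)\<bar> \<le> \<bar>A\<bar> * (z2\<^sup>2 + z3\<^sup>2)"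
    using mult_left_mono[OF abs_mult_le_sum_squares[of z2 z3], of "\<bar>A\<bar>"] by (simp add: abs_mult)
  have b: "2 * \<bar>B * (z0 * z3)\<bar> \<le> \<bar>B\<bar> * (z0\<^sup>2 + z3\<^sup>2)"
    using mult_left_mono[OF abs_mult_le_sum_squares[of z0 z3], of "\<bar>B\<bar>"] by (simp add: abs_mult)
  have "\<bar>z0 * z1 + z1 * z2 + z2 * z3 + z3 * (- A * z2 - B * z0)\<bar>
      \<le> \<bar>z0 * z1\<bar> + \<bar>z1 * z2\<bar> + \<bar>z2 * z3\<bar> + \<bar>A * (z2 * z3)\<bar> + \<bar>B * (z0 * z3)\<bar>"
    by (simp add: algebra_simps)
  moreover have "(3 + \<bar>A\<bar> + \<bar>B\<bar>) * (z0\<^sup>2 + z1\<^sup>2 + z2\<^sup>2 + z3\<^sup>2)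
      = (z0\<^sup>2 + z1\<^sup>2) + (z1\<^sup>2 + z2\<^sup>2) + (z2\<^sup>2 + z3\<^sup>2) + \<bar>A\<bar> * (z2\<^sup>2 + z3\<^sup>2)
        + \<bar>B\<bar> * (z0\<^sup>2 + z3\<^sup>2) + (2 * z0\<^sup>2 + z1\<^sup>2 + z2\<^sup>2 + 2 * z3\<^sup>2 + \<bar>A\<bar> * (z0\<^sup>2 + z1\<^sup>2) + \<bar>B\<bar> * (z1\<^sup>2 + z2\<^sup>2))"
    by (simp add: algebra_simps)
  moreover have "0 \<le> 2 * z0\<^sup>2 + z1\<^sup>2 + z2\<^sup>2 + 2 * z3\<^sup>2 + \<bar>A\<bar> * (z0\<^sup>2 + z1\<^sup>2) + \<bar>B\<bar> * (z1\<^sup>2 + z2\<^sup>2)"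
    by simp
  ultimately show ?thesis
    using a b abs_mult_le_sum_squares[of z0 z1] abs_mult_le_sum_squares[of z1 z2]
      abs_mult_le_sum_squares[of z2 z3]
    by linarith
qed

lemma gronwall_vanishing:
  fixes E E' h \<Theta> :: "real \<Rightarrow> real"
  assumes S: "is_interval S" and p: "p \<in> S" "E p = 0" and s: "s \<in> S"
    and E: "\<And>t. t \<in> S \<Longrightarrow> (E has_real_derivative E' t) (at t)"
    and \<Theta>: "\<And>t. t \<in> S \<Longrightarrow> (\<Theta> has_real_derivative h t) (at t)"
    and bound: "\<And>t. t \<in> S \<Longrightarrow> \<bar>E' t\<bar> \<le> M * h t * E t"
    and nonneg: "\<And>t. t \<in> S \<Longrightarrow> 0 \<le> E t"
  shows "E s = 0"
proof -
  have between: "t \<in> S" if "x \<in> S" "y \<in> S" "x \<le> t" "t \<le> y" for x y t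
    using S that unfolding is_interval_1 by blast
  have "E s \<le> 0"
  proof (cases "p \<le> s")
    case True
    define F where "F t = E t * exp (- M * \<Theta> t)" for t
    have "F s \<le> F p"
    proof (rule DERIV_nonpos_imp_nonincreasing[OF True])
      fix t assume "p \<le> t" "t \<le> s"
      hence t: "t \<in> S" using between[OF p(1) s] by blast
      have "(F has_real_derivative (E' t - M * h t * E t) * exp (- M * \<Theta> t)) (at t)"
        unfolding F_def using E[OF t] \<Theta>[OF t]
        by (auto intro!: derivative_eq_intros simp: algebra_simps)
      moreover have "(E' t - M * h t * E t) * exp (- M * \<Theta> t) \<le> 0"
        using bound[OF t] by (intro mult_nonpos_nonneg) auto
      ultimately show "\<exists>y. (F has_real_derivative y) (at t) \<and> y \<le> 0" by blast
    qed
    thus ?thesis using p(2) by (simp add: F_def mult_le_0_iff)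
  next
    case False
    define F where "F t = E t * exp (M * \<Theta> t)" for t
    have "F s \<le> F p"
    proof (rule DERIV_nonneg_imp_nondecreasing[of s p])
      show "s \<le> p" using False by simp
      fix t assume "s \<le> t" "t \<le> p"
      hence t: "t \<in> S" using between[OF s p(1)] by blast
      have "(F has_real_derivative (E' t + M * h t * E t) * exp (M * \<Theta> t)) (at t)"
        unfolding F_def using E[OF t] \<Theta>[OF t]
        by (auto intro!: derivative_eq_intros simp: algebra_simps)
      moreover have "(E' t + M * h t * E t) * exp (M * \<Theta> t) \<ge> 0"
        using bound[OF t] by (intro mult_nonneg_nonneg) auto
      ultimately show "\<exists>y. (F has_real_derivative y) (at t) \<and> y \<ge> 0" by blast
    qed
    thus ?thesis using p(2) by (simp add: F_def mult_le_0_iff)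
  qed
  thus ?thesis using nonneg[OF s] by simp
qed

lemma companion_chain_eq_0:
  assumes Z: "companion_chain S h A B Z" and S: "is_interval S"
    and \<Theta>: "\<And>t. t \<in> S \<Longrightarrow> (\<Theta> has_real_derivative h t) (at t)"
    and h: "\<And>t. t \<in> S \<Longrightarrow> 0 \<le> h t"
    and p: "p \<in> S" "\<And>j. j < 4 \<Longrightarrow> Z j p = 0" and s: "s \<in> S" and j: "j < 4"
  shows "Z j s = 0"
proof -
  define E where "E t = (Z 0 t)\<^sup>2 + (Z 1 t)\<^sup>2 + (Z 2 t)\<^sup>2 + (Z 3 t)\<^sup>2" for t
  define E' where "E' t = 2 * h t * (Z 0 t * Z 1 t + Z 1 t * Z 2 t + Z 2 t * Z 3 t
      + Z 3 t * (- A * Z 2 t - B * Z 0 t))" for t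
  have "E s = 0"
  proof (rule gronwall_vanishing[OF S p(1) _ s])
    show "E p = 0" using p(2) by (simp add: E_def)
    fix t assume t: "t \<in> S"
    show "(E has_real_derivative E' t) (at t)"
      unfolding E_def E'_def
      using companion_chainD(1)[OF Z t, of 0] companion_chainD(1)[OF Z t, of 1]
        companion_chainD(1)[OF Z t, of 2] companion_chainD(2)[OF Z t]
      by (auto intro!: derivative_eq_intros simp: numeral_2_eq_2 numeral_3_eq_3 algebra_simps)
    show "\<bar>E' t\<bar> \<le> (3 + \<bar>A\<bar> + \<bar>B\<bar>) * h t * E t"
    proof -
      have "\<bar>E' t\<bar> = h t * (2 * \<bar>Z 0 t * Z 1 t + Z 1 t * Z 2 t + Z 2 t * Z 3 t
          + Z 3 t * (- A * Z 2 t - B * Z 0 t)\<bar>)"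
        using h[OF t] by (simp add: E'_def abs_mult)
      also have "\<dots> \<le> h t * ((3 + \<bar>A\<bar> + \<bar>B\<bar>) * E t)"
        unfolding E_def by (rule mult_left_mono[OF companion_energy_bound h[OF t]])
      finally show ?thesis by (simp add: algebra_simps)
    qed
    show "0 \<le> E t" by (simp add: E_def)
  qed (use \<Theta> in auto)
  thus ?thesis using j by (auto simp: E_def less_Suc_eq numeral_eq_Suc add_nonneg_eq_0_iff)
qed

lemma companion_chain_vanishing:
  assumes Z: "companion_chain S h A B Z" and S: "open S"
    and h: "\<And>s. s \<in> S \<Longrightarrow> h s \<noteq> 0"
    and Z0: "\<And>s. s \<in> S \<Longrightarrow> Z 0 s = 0"
    and j: "j < 4" and s: "s \<in> S"
  shows "Z j s = 0"
  using j s
proof (induction j arbitrary: s)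
  case 0
  then show ?case using Z0 by simp
next
  case (Suc j)
  have "(Z j has_real_derivative 0) (at s)"
    using Suc by (intro has_field_derivative_transform_within_open[OF DERIV_const S]) auto
  moreover have "(Z j has_real_derivative h s * Z (Suc j) s) (at s)"
    using companion_chainD(1)[OF Z Suc.prems(2)] Suc.prems(1) by simp
  ultimately have "0 = h s * Z (Suc j) s" by (rule DERIV_unique)
  thus ?case using h[OF Suc.prems(2)] by simp
qed

section \<open>Fundamental systems\<close>

definition lincomb4 ::
  "real \<times> real \<times> real \<times> real \<Rightarrow> (nat \<Rightarrow> real \<Rightarrow> real) \<Rightarrow> (nat \<Rightarrow> real \<Rightarrow> real)
    \<Rightarrow> (nat \<Rightarrow> real \<Rightarrow> real) \<Rightarrow> (nat \<Rightarrow> real \<Rightarrow> real) \<Rightarrow> nat \<Rightarrow> real \<Rightarrow> real" where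
  "lincomb4 c F1 F2 F3 F4 j t =
     (case c of (c1, c2, c3, c4) \<Rightarrow> c1 * F1 j t + c2 * F2 j t + c3 * F3 j t + c4 * F4 j t)"

lemma lincomb4_simp [simp]:
  "lincomb4 (c1, c2, c3, c4) F1 F2 F3 F4 j t = c1 * F1 j t + c2 * F2 j t + c3 * F3 j t + c4 * F4 j t"
  by (simp add: lincomb4_def)

lemma companion_chain_lincomb4:
  assumes "companion_chain S h A B F1" "companion_chain S h A B F2"
    and "companion_chain S h A B F3" "companion_chain S h A B F4"
  shows "companion_chain S h A B (lincomb4 c F1 F2 F3 F4)"
proof -
  obtain c1 c2 c3 c4 where c: "c = (c1, c2, c3, c4)" by (rule prod_cases4)
  have "companion_chain S h A B (\<lambda>j s. 1 * (c1 * F1 j s + c2 * F2 j s) + 1 * (c3 * F3 j s + c4 * F4 j s))"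
    by (rule companion_chain_lincomb[OF companion_chain_lincomb[OF assms(1,2)]
          companion_chain_lincomb[OF assms(3,4)]])
  moreover have "lincomb4 c F1 F2 F3 F4 =
      (\<lambda>j s. 1 * (c1 * F1 j s + c2 * F2 j s) + 1 * (c3 * F3 j s + c4 * F4 j s))"
    by (simp add: c fun_eq_iff)
  ultimately show ?thesis by simp
qed

definition fundamental_system ::
  "real \<Rightarrow> real \<Rightarrow> (nat \<Rightarrow> real \<Rightarrow> real) \<Rightarrow> (nat \<Rightarrow> real \<Rightarrow> real)
    \<Rightarrow> (nat \<Rightarrow> real \<Rightarrow> real) \<Rightarrow> (nat \<Rightarrow> real \<Rightarrow> real) \<Rightarrow> bool" where
  "fundamental_system A B F1 F2 F3 F4 \<longleftrightarrow>
     companion_chain UNIV (\<lambda>_. 1) A B F1 \<and> companion_chain UNIV (\<lambda>_. 1) A B F2 \<and>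
     companion_chain UNIV (\<lambda>_. 1) A B F3 \<and> companion_chain UNIV (\<lambda>_. 1) A B F4 \<and>
     (\<forall>c. (\<forall>j<4. lincomb4 c F1 F2 F3 F4 j 0 = 0) \<longrightarrow> c = 0)"

lemma fundamental_systemI:
  assumes "companion_chain UNIV (\<lambda>_. 1) A B F1" "companion_chain UNIV (\<lambda>_. 1) A B F2"
    and "companion_chain UNIV (\<lambda>_. 1) A B F3" "companion_chain UNIV (\<lambda>_. 1) A B F4"
    and "\<And>c1 c2 c3 c4. (\<And>j. j < 4 \<Longrightarrow> c1 * F1 j 0 + c2 * F2 j 0 + c3 * F3 j 0 + c4 * F4 j 0 = 0)
      \<Longrightarrow> c1 = 0 \<and> c2 = 0 \<and> c3 = 0 \<and> c4 = 0"
  shows "fundamental_system A B F1 F2 F3 F4"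
  unfolding fundamental_system_def
proof (intro conjI assms allI impI)
  fix c :: "real \<times> real \<times> real \<times> real"
  assume "\<forall>j<4. lincomb4 c F1 F2 F3 F4 j 0 = 0"
  moreover obtain c1 c2 c3 c4 where "c = (c1, c2, c3, c4)" by (rule prod_cases4)
  ultimately show "c = 0" using assms(5)[of c1 c2 c3 c4] by (simp add: zero_prod_def)
qed

lemma fundamental_system_chain:
  "fundamental_system A B F1 F2 F3 F4 \<Longrightarrow> companion_chain UNIV (\<lambda>_. 1) A B (lincomb4 c F1 F2 F3 F4)"
  unfolding fundamental_system_def by (blast intro: companion_chain_lincomb4)

lemma fundamental_system_eq_0:
  assumes F: "fundamental_system A B F1 F2 F3 F4"
    and z: "\<And>j. j < 4 \<Longrightarrow> lincomb4 c F1 F2 F3 F4 j t0 = 0"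
  shows "c = 0"
proof -
  have "lincomb4 c F1 F2 F3 F4 j 0 = 0" if "j < 4" for j
    by (rule companion_chain_eq_0[OF fundamental_system_chain[OF F] is_interval_univ DERIV_ident
          _ UNIV_I z UNIV_I that]) simp
  thus ?thesis using F unfolding fundamental_system_def by blast
qed

lemma lincomb4_diff: "lincomb4 (c - d) F1 F2 F3 F4 j t = lincomb4 c F1 F2 F3 F4 j t - lincomb4 d F1 F2 F3 F4 j t"
  by (cases c, cases d) (simp add: algebra_simps)

lemma fundamental_system_initial_value:
  assumes F: "fundamental_system A B F1 F2 F3 F4"
  obtains c where "\<And>j. j < 4 \<Longrightarrow> lincomb4 c F1 F2 F3 F4 j t0 = y j"
proof -
  define \<Phi> where "\<Phi> c = (lincomb4 c F1 F2 F3 F4 0 t0, lincomb4 c F1 F2 F3 F4 1 t0,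
      lincomb4 c F1 F2 F3 F4 2 t0, lincomb4 c F1 F2 F3 F4 3 t0)" for c
  have "linear \<Phi>"
    by (rule linearI) (auto simp: \<Phi>_def lincomb4_def algebra_simps split: prod.splits)
  moreover have "inj \<Phi>"
  proof (rule injI)
    fix c d assume "\<Phi> c = \<Phi> d"
    hence "lincomb4 (c - d) F1 F2 F3 F4 j t0 = 0" if "j < 4" for j
      using that by (auto simp: \<Phi>_def lincomb4_diff less_Suc_eq numeral_eq_Suc)
    thus "c = d" using fundamental_system_eq_0[OF F, of "c - d" t0] by simp
  qed
  ultimately obtain c where "\<Phi> c = (y 0, y 1, y 2, y 3)"
    by (metis linear_injective_imp_surjective surjD)
  then have "\<And>j. j < 4 \<Longrightarrow> lincomb4 c F1 F2 F3 F4 j t0 = y j"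
    by (auto simp: \<Phi>_def less_Suc_eq numeral_eq_Suc)
  then show ?thesis by (rule that)
qed

lemma fundamental_system_span:
  assumes F: "fundamental_system A B F1 F2 F3 F4"
    and Z: "companion_chain S h A B Z" and S: "is_interval S" "p \<in> S"
    and \<theta>: "\<And>s. s \<in> S \<Longrightarrow> (\<theta> has_real_derivative h s) (at s)"
    and h: "\<And>s. s \<in> S \<Longrightarrow> 0 \<le> h s"
  obtains c where "\<And>s. s \<in> S \<Longrightarrow> Z 0 s = lincomb4 c F1 F2 F3 F4 0 (\<theta> s)"
proof -
  obtain c where c: "\<And>j. j < 4 \<Longrightarrow> lincomb4 c F1 F2 F3 F4 j (\<theta> p) = Z j p"
    using fundamental_system_initial_value[OF F, of "\<theta> p" "\<lambda>j. Z j p"] by blast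
  have "companion_chain S h A B (\<lambda>j s. 1 * Z j s + (- 1) * lincomb4 c F1 F2 F3 F4 j (\<theta> s))"
    by (rule companion_chain_lincomb[OF Z companion_chain_compose[OF fundamental_system_chain[OF F] \<theta>]])
  hence "1 * Z 0 s + (- 1) * lincomb4 c F1 F2 F3 F4 0 (\<theta> s) = 0" if "s \<in> S" for s
    by (rule companion_chain_eq_0[OF _ S(1) \<theta> h S(2) _ that]) (use c in auto)
  then have "\<And>s. s \<in> S \<Longrightarrow> Z 0 s = lincomb4 c F1 F2 F3 F4 0 (\<theta> s)" by simp
  then show ?thesis by (rule that)
qed

lemma fundamental_system_independent:
  assumes F: "fundamental_system A B F1 F2 F3 F4" and S: "open S" "p \<in> S"
    and \<theta>: "\<And>s. s \<in> S \<Longrightarrow> (\<theta> has_real_derivative h s) (at s)"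
    and h: "\<And>s. s \<in> S \<Longrightarrow> h s \<noteq> 0"
    and z: "\<And>s. s \<in> S \<Longrightarrow> lincomb4 c F1 F2 F3 F4 0 (\<theta> s) = 0"
  shows "c = 0"
proof (rule fundamental_system_eq_0[OF F])
  fix j :: nat assume "j < 4"
  with companion_chain_vanishing[OF companion_chain_compose[OF fundamental_system_chain[OF F] \<theta>] S(1) h z]
  show "lincomb4 c F1 F2 F3 F4 j (\<theta> p) = 0" using S(2) by blast
qed

section \<open>Reduction to constant coefficients\<close>

lemma C4_onD:
  assumes "C4_on lo hi u" "s \<in> {lo<..<hi}"
  shows "(u has_real_derivative deriv u s) (at s)"
    and "(deriv u has_real_derivative deriv (deriv u) s) (at s)"
    and "(deriv (deriv u) has_real_derivative deriv (deriv (deriv u)) s) (at s)"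
    and "(deriv (deriv (deriv u)) has_real_derivative deriv (deriv (deriv (deriv u))) s) (at s)"
proof -
  have "((deriv ^^ n) u has_real_derivative (deriv ^^ Suc n) u s) (at s)" if "n < 4" for n
    using assms that unfolding C4_on_def by blast
  from this[of 0] this[of 1] this[of 2] this[of 3] show
    "(u has_real_derivative deriv u s) (at s)"
    "(deriv u has_real_derivative deriv (deriv u) s) (at s)"
    "(deriv (deriv u) has_real_derivative deriv (deriv (deriv u)) s) (at s)"
    "(deriv (deriv (deriv u)) has_real_derivative deriv (deriv (deriv (deriv u))) s) (at s)"
    by (simp_all add: numeral_eq_Suc)
qed

lemma weighted_operator_expand:
  fixes h u1 u2 u3 u4 :: "real \<Rightarrow> real"
  assumes S: "open S" "t \<in> S"
    and h: "\<And>s. s \<in> S \<Longrightarrow> h s \<noteq> 0" "\<And>s. s \<in> S \<Longrightarrow> (h has_real_derivative a * (s - c) * h s ^ 3) (at s)"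
    and u1: "(u1 has_real_derivative u2 t) (at t)"
    and u2: "\<And>s. s \<in> S \<Longrightarrow> (u2 has_real_derivative u3 s) (at s)"
    and u3: "(u3 has_real_derivative u4 t) (at t)"
  shows "deriv (deriv (\<lambda>s. 2 / h s ^ 3 * u2 s)) t + mu * deriv (\<lambda>s. 2 / h s * u1 s) t
    = 2 * u4 t / h t ^ 3 - 12 * a * (t - c) * u3 t / h t - 6 * a * u2 t / h t
      + 6 * a\<^sup>2 * (t - c)\<^sup>2 * h t * u2 t + mu * (2 * u2 t / h t - 2 * a * (t - c) * h t * u1 t)"
proof -
  define R where "R s = 2 * u3 s / h s ^ 3 - 6 * a * (s - c) * u2 s / h s" for s
  have dR: "((\<lambda>s. 2 / h s ^ 3 * u2 s) has_real_derivative R s) (at s)" if "s \<in> S" for s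
    using h(1,2)[OF that] u2[OF that] unfolding R_def
    by (auto intro!: derivative_eq_intros simp: field_simps power2_eq_square power3_eq_cube)
  have R_eq: "R s = deriv (\<lambda>s. 2 / h s ^ 3 * u2 s) s" if "s \<in> S" for s
    using DERIV_imp_deriv[OF dR[OF that]] by simp
  have "(R has_real_derivative
      2 * u4 t / h t ^ 3 - 12 * a * (t - c) * u3 t / h t - 6 * a * u2 t / h t
      + 6 * a\<^sup>2 * (t - c)\<^sup>2 * h t * u2 t) (at t)"
    using h(1,2)[OF S(2)] u2[OF S(2)] u3 unfolding R_def
    by (auto intro!: derivative_eq_intros simp: field_simps power2_eq_square power3_eq_cube)
  hence "(deriv (\<lambda>s. 2 / h s ^ 3 * u2 s) has_real_derivative
      2 * u4 t / h t ^ 3 - 12 * a * (t - c) * u3 t / h t - 6 * a * u2 t / h t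
      + 6 * a\<^sup>2 * (t - c)\<^sup>2 * h t * u2 t) (at t)"
    by (rule has_field_derivative_transform_within_open[OF _ S R_eq])
  moreover have "((\<lambda>s. 2 / h s * u1 s) has_real_derivative
      2 * u2 t / h t - 2 * a * (t - c) * h t * u1 t) (at t)"
    using h(1,2)[OF S(2)] u1
    by (auto intro!: derivative_eq_intros simp: field_simps power2_eq_square power3_eq_cube)
  ultimately show ?thesis by (simp add: DERIV_imp_deriv)
qed

text \<open>\<open>theta_derivs h a c u j\<close> is the \<open>j\<close>-th derivative of \<open>u\<close> with respect to \<open>\<theta>\<close>, where
  \<open>\<theta>' = h\<close>, expressed through derivatives in \<open>s\<close> using \<open>h' = a (s - c) h\<^sup>3\<close>.\<close>

definition theta_derivs :: "(real \<Rightarrow> real) \<Rightarrow> real \<Rightarrow> real \<Rightarrow> (real \<Rightarrow> real) \<Rightarrow> nat \<Rightarrow> real \<Rightarrow> real" where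
  "theta_derivs h a c u j s =
     [u s,
      deriv u s / h s,
      deriv (deriv u) s / h s ^ 2 - a * (s - c) * deriv u s,
      deriv (deriv (deriv u)) s / h s ^ 3 - 3 * a * (s - c) * deriv (deriv u) s / h s
        - a * deriv u s / h s] ! j"

lemma theta_derivs_companion_chain:
  assumes u: "C4_on lo hi u"
    and h: "\<And>s. s \<in> {lo<..<hi} \<Longrightarrow> 0 < h s"
      "\<And>s. s \<in> {lo<..<hi} \<Longrightarrow> (h has_real_derivative a * (s - c) * h s ^ 3) (at s)"
    and ode: "\<And>s. s \<in> {lo<..<hi} \<Longrightarrow>
      deriv (deriv (\<lambda>t. 2 / h t ^ 3 * deriv (deriv u) t)) s
      + mu * deriv (\<lambda>t. 2 / h t * deriv u t) s + 2 * a * h s * u s = 0"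
  shows "companion_chain {lo<..<hi} h (mu + a) a (theta_derivs h a c u)"
proof (rule companion_chainI)
  fix s and j :: nat assume s: "s \<in> {lo<..<hi}" and j: "j < 3"
  note d = C4_onD[OF u s]
  have "h s \<noteq> 0" using h(1)[OF s] by simp
  hence "(theta_derivs h a c u j has_real_derivative h s * theta_derivs h a c u (Suc j) s) (at s)"
    if "j = 0 \<or> j = 1 \<or> j = 2"
    using that h(2)[OF s] d unfolding theta_derivs_def
    by (elim disjE) (auto intro!: derivative_eq_intros
        simp: field_simps power2_eq_square power3_eq_cube numeral_eq_Suc)
  thus "(theta_derivs h a c u j has_real_derivative h s * theta_derivs h a c u (Suc j) s) (at s)"
    using j by (auto simp: less_Suc_eq numeral_eq_Suc)
next
  fix s assume s: "s \<in> {lo<..<hi}"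
  define u1 u2 u3 u4 where "u1 = deriv u" "u2 = deriv u1" "u3 = deriv u2" "u4 = deriv u3"
  note d = C4_onD[OF u s, folded u1_u2_u3_u4_def]
  have Hs: "h s \<noteq> 0" using h(1)[OF s] by simp
  have "deriv (deriv (\<lambda>t. 2 / h t ^ 3 * u2 t)) s + mu * deriv (\<lambda>t. 2 / h t * u1 t) s
    = 2 * u4 s / h s ^ 3 - 12 * a * (s - c) * u3 s / h s - 6 * a * u2 s / h s
      + 6 * a\<^sup>2 * (s - c)\<^sup>2 * h s * u2 s + mu * (2 * u2 s / h s - 2 * a * (s - c) * h s * u1 s)"
  proof (rule weighted_operator_expand[where S = "{lo<..<hi}" and c = c])
    show "s' \<in> {lo<..<hi} \<Longrightarrow> h s' \<noteq> 0" for s' using h(1)[of s'] by simp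
    show "s' \<in> {lo<..<hi} \<Longrightarrow> (u2 has_real_derivative u3 s') (at s')" for s'
      using C4_onD(3)[OF u, folded u1_u2_u3_u4_def] .
  qed (use s h(2) d in auto)
  hence "2 * u4 s / h s ^ 3 = 12 * a * (s - c) * u3 s / h s + 6 * a * u2 s / h s
      - 6 * a\<^sup>2 * (s - c)\<^sup>2 * h s * u2 s - mu * (2 * u2 s / h s - 2 * a * (s - c) * h s * u1 s)
      - 2 * a * h s * u s"
    using ode[OF s, folded u1_u2_u3_u4_def] by simp
  hence u4: "u4 s = h s ^ 3 / 2 * (12 * a * (s - c) * u3 s / h s + 6 * a * u2 s / h s
      - 6 * a\<^sup>2 * (s - c)\<^sup>2 * h s * u2 s - mu * (2 * u2 s / h s - 2 * a * (s - c) * h s * u1 s)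
      - 2 * a * h s * u s)"
    using Hs by (simp add: field_simps)
  have "((\<lambda>s. u3 s / h s ^ 3 - 3 * a * (s - c) * u2 s / h s - a * u1 s / h s) has_real_derivative
      h s * (- (mu + a) * (u2 s / h s ^ 2 - a * (s - c) * u1 s) - a * u s)) (at s)"
    using h(2)[OF s] d Hs
    by (auto intro!: derivative_eq_intros simp: u4) (simp add: field_simps; algebra)
  moreover have "theta_derivs h a c u 3 =
      (\<lambda>s. u3 s / h s ^ 3 - 3 * a * (s - c) * u2 s / h s - a * u1 s / h s)"
    by (simp add: fun_eq_iff theta_derivs_def u1_u2_u3_u4_def numeral_eq_Suc)
  ultimately show "(theta_derivs h a c u 3 has_real_derivative
      h s * (- (mu + a) * theta_derivs h a c u 2 s - a * theta_derivs h a c u 0 s)) (at s)"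
    by (simp add: theta_derivs_def u1_u2_u3_u4_def numeral_eq_Suc)
qed

section \<open>The critical curve\<close>

lemma critical_ratio_bounds:
  fixes x0 L :: real
  assumes "0 < 3 * x0" "3 * x0 < L"
  shows "0 < x0 / (L + x0)" "x0 / (L + x0) < 1 / 4"
  using assms by (simp_all add: field_simps)

lemma L_less_kk:
  assumes x0L: "0 < 3 * x0" "3 * x0 < L"
  shows "L < kk x0 L"
proof -
  have "sqrt (x0 / (L + x0)) < sqrt (1 / 4)"
    using critical_ratio_bounds(2)[OF x0L] real_sqrt_less_iff by blast
  hence "sqrt (x0 / (L + x0)) < 1 / 2" by (simp add: real_sqrt_divide)
  hence "0 < sig x0 L" "sig x0 L < pi / 2"
    using critical_ratio_bounds[OF x0L] by (simp_all add: sig_def)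
  hence "0 < sin (sig x0 L)" "sin (sig x0 L) < 1"
    using sin_monotone_2pi[of "sig x0 L" "pi / 2"] by (auto intro: sin_gt_zero)
  thus ?thesis using x0L by (simp add: kk_def field_simps)
qed

lemma abs_diff_less_kk:
  assumes "0 < 3 * x0" "3 * x0 < L" "s \<in> {0<..<2*L}"
  shows "\<bar>s - L\<bar> < kk x0 L"
  using L_less_kk[OF assms(1,2)] assms(3) by auto

lemma square_diff_less_kk_square:
  assumes "0 < 3 * x0" "3 * x0 < L" "s \<in> {0<..<2*L}"
  shows "(s - L)\<^sup>2 < (kk x0 L)\<^sup>2"
proof -
  have "\<bar>s - L\<bar>\<^sup>2 < (kk x0 L)\<^sup>2"
    using abs_diff_less_kk[OF assms] by (intro power_strict_mono) auto
  thus ?thesis by simp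
qed

lemma H_pos:
  assumes "0 < 3 * x0" "3 * x0 < L" "s \<in> {0<..<2*L}"
  shows "0 < H x0 L s"
  using square_diff_less_kk_square[OF assms] assms(1,2) by (simp add: H_def sig_def)

lemma H_has_real_derivative:
  assumes x0L: "0 < 3 * x0" "3 * x0 < L" and s: "s \<in> {0<..<2*L}"
  shows "(H x0 L has_real_derivative x0 / (L + x0) * (s - L) * H x0 L s ^ 3) (at s)"
proof -
  define R where "R = sqrt ((kk x0 L)\<^sup>2 - (s - L)\<^sup>2)"
  have pos: "0 < (kk x0 L)\<^sup>2 - (s - L)\<^sup>2" using square_diff_less_kk_square[OF assms] by simp
  hence R: "0 < R" "R\<^sup>2 = (kk x0 L)\<^sup>2 - (s - L)\<^sup>2" by (simp_all add: R_def)
  have sig: "0 < sig x0 L" "(sig x0 L)\<^sup>2 = pi\<^sup>2 * (x0 / (L + x0))"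
    using critical_ratio_bounds[OF x0L] by (simp_all add: sig_def power_mult_distrib)
  define F where "F t = sqrt ((kk x0 L)\<^sup>2 - (t - L)\<^sup>2)" for t
  have "(F has_real_derivative - (s - L) / R) (at s)"
    unfolding F_def using pos R(1)
    by (auto intro!: derivative_eq_intros simp: R_def[symmetric] field_simps)
  hence "((\<lambda>t. pi / (sig x0 L * F t)) has_real_derivative pi * (s - L) / (sig x0 L * R ^ 3)) (at s)"
    using pos R(1) sig(1)
    by (auto intro!: derivative_eq_intros simp: F_def R_def[symmetric] field_simps power3_eq_cube)
  moreover have "H x0 L = (\<lambda>t. pi / (sig x0 L * F t))" by (simp add: fun_eq_iff H_def F_def)
  ultimately have "(H x0 L has_real_derivative pi * (s - L) / (sig x0 L * R ^ 3)) (at s)" by simp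
  moreover have "pi * (s - L) / (sig x0 L * R ^ 3) = x0 / (L + x0) * (s - L) * H x0 L s ^ 3"
  proof -
    define a where "a = x0 / (L + x0)"
    have Hs: "H x0 L s = pi / (sig x0 L * R)" by (simp add: H_def R_def)
    have "0 < a" using critical_ratio_bounds[OF x0L] by (simp add: a_def)
    show ?thesis using R(1) sig \<open>0 < a\<close> unfolding a_def[symmetric] Hs
      by (simp add: field_simps power3_eq_cube power2_eq_square)
  qed
  ultimately show ?thesis by simp
qed

lemma theta_has_real_derivative:
  assumes x0L: "0 < 3 * x0" "3 * x0 < L" and s: "s \<in> {0<..<2*L}"
  shows "(theta x0 L has_real_derivative H x0 L s) (at s)"
proof -
  have K: "L < kk x0 L" using L_less_kk[OF x0L] .
  hence "-1 < (s - L) / kk x0 L" "(s - L) / kk x0 L < 1"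
    using abs_diff_less_kk[OF assms] by (auto simp: abs_less_iff field_simps)
  moreover have "sqrt ((kk x0 L)\<^sup>2 - (s - L)\<^sup>2) = kk x0 L * sqrt (1 - ((s - L) / kk x0 L)\<^sup>2)"
  proof -
    have "(kk x0 L)\<^sup>2 - (s - L)\<^sup>2 = (kk x0 L)\<^sup>2 * (1 - ((s - L) / kk x0 L)\<^sup>2)"
      using K x0L by (simp add: field_simps)
    thus ?thesis using K x0L by (simp add: real_sqrt_mult)
  qed
  moreover have "0 < sig x0 L" using x0L by (simp add: sig_def)
  ultimately show ?thesis using K x0L
    unfolding theta_def[abs_def] H_def
    by (auto intro!: derivative_eq_intros DERIV_arcsin simp: field_simps)
qed

lemma solution_in_span:
  assumes x0L: "0 < 3 * x0" "3 * x0 < L"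
    and F: "fundamental_system (mu + x0 / (L + x0)) (x0 / (L + x0)) F1 F2 F3 F4"
    and u: "is_solution x0 L mu u"
  obtains c where "\<And>s. s \<in> {0<..<2*L} \<Longrightarrow> u s = lincomb4 c F1 F2 F3 F4 0 (theta x0 L s)"
proof -
  define a where "a = x0 / (L + x0)"
  from u have C4: "C4_on 0 (2*L) u"
    and ode: "\<And>s. s \<in> {0<..<2*L} \<Longrightarrow> deriv (deriv (\<lambda>t. 2 / H x0 L t ^ 3 * deriv (deriv u) t)) s
      + mu * deriv (\<lambda>t. 2 / H x0 L t * deriv u t) s + 2 * a * H x0 L s * u s = 0"
    using x0L by (auto simp: is_solution_def rr_def qq_def pp_def lam_def a_def field_simps)
  have H: "\<And>s. s \<in> {0<..<2*L} \<Longrightarrow> 0 < H x0 L s"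
    by (rule H_pos[OF x0L])
  have dH: "\<And>s. s \<in> {0<..<2*L} \<Longrightarrow> (H x0 L has_real_derivative a * (s - L) * H x0 L s ^ 3) (at s)"
    unfolding a_def by (rule H_has_real_derivative[OF x0L])
  have "companion_chain {0<..<2*L} (H x0 L) (mu + a) a (theta_derivs (H x0 L) a L u)"
    using theta_derivs_companion_chain[OF C4, of "H x0 L" a L mu] H dH ode by simp
  then obtain c where
    "\<And>s. s \<in> {0<..<2*L} \<Longrightarrow> theta_derivs (H x0 L) a L u 0 s = lincomb4 c F1 F2 F3 F4 0 (theta x0 L s)"
    by (rule fundamental_system_span[OF F[folded a_def] _ _ _ theta_has_real_derivative[OF x0L]])
      (use x0L H in \<open>auto simp: is_interval_1 less_imp_le\<close>)
  then have "\<And>s. s \<in> {0<..<2*L} \<Longrightarrow> u s = lincomb4 c F1 F2 F3 F4 0 (theta x0 L s)"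
    by (simp add: theta_derivs_def)
  then show ?thesis by (rule that)
qed

lemma general_solution_basisI:
  assumes x0L: "0 < 3 * x0" "3 * x0 < L"
    and F: "fundamental_system (mu + x0 / (L + x0)) (x0 / (L + x0)) F1 F2 F3 F4"
  shows "general_solution_basis x0 L mu (F1 0) (F2 0) (F3 0) (F4 0)"
  unfolding general_solution_basis_def
proof (intro conjI allI impI)
  fix u assume u: "is_solution x0 L mu u"
  obtain c where c: "\<And>s. s \<in> {0<..<2*L} \<Longrightarrow> u s = lincomb4 c F1 F2 F3 F4 0 (theta x0 L s)"
    using solution_in_span[OF x0L F u] by blast
  obtain c1 c2 c3 c4 where "c = (c1, c2, c3, c4)" by (rule prod_cases4)
  with c show "\<exists>c1 c2 c3 c4. \<forall>s\<in>{0<..<2*L}. u s = c1 * F1 0 (theta x0 L s)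
      + c2 * F2 0 (theta x0 L s) + c3 * F3 0 (theta x0 L s) + c4 * F4 0 (theta x0 L s)"
    by auto
next
  fix c1 c2 c3 c4
  assume "\<forall>s\<in>{0<..<2*L}. c1 * F1 0 (theta x0 L s) + c2 * F2 0 (theta x0 L s)
      + c3 * F3 0 (theta x0 L s) + c4 * F4 0 (theta x0 L s) = 0"
  hence "(c1, c2, c3, c4) = 0"
    using fundamental_system_independent[OF F, of "{0<..<2*L}" L "theta x0 L" "H x0 L"] x0L
      H_pos[OF x0L] theta_has_real_derivative[OF x0L] by force
  thus "c1 = 0" "c2 = 0" "c3 = 0" "c4 = 0" by (simp_all add: zero_prod_def)
qed

section \<open>Explicit fundamental systems\<close>

definition harmonic_derivs :: "real \<Rightarrow> real \<Rightarrow> nat \<Rightarrow> real \<Rightarrow> real" where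
  "harmonic_derivs w \<phi> j t =
     [sin (w * t + \<phi>), w * cos (w * t + \<phi>), - (w\<^sup>2 * sin (w * t + \<phi>)), - (w ^ 3 * cos (w * t + \<phi>))] ! j"

lemma harmonic_derivs_chain:
  assumes "w ^ 4 - A * w\<^sup>2 + B = 0"
  shows "companion_chain UNIV (\<lambda>_. 1) A B (harmonic_derivs w \<phi>)"
proof (rule companion_chainI)
  fix s and j :: nat assume "j < 3"
  hence "j = 0 \<or> j = 1 \<or> j = 2" by auto
  thus "(harmonic_derivs w \<phi> j has_real_derivative 1 * harmonic_derivs w \<phi> (Suc j) s) (at s)"
    unfolding harmonic_derivs_def
    by (elim disjE) (auto intro!: derivative_eq_intros simp: numeral_eq_Suc power2_eq_square)
next
  fix s
  have B: "B = A * w\<^sup>2 - w ^ 4" using assms by simp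
  show "(harmonic_derivs w \<phi> 3 has_real_derivative
      1 * (- A * harmonic_derivs w \<phi> 2 s - B * harmonic_derivs w \<phi> 0 s)) (at s)"
    unfolding harmonic_derivs_def
    by (auto intro!: derivative_eq_intros simp: B numeral_eq_Suc algebra_simps power2_eq_square
        power3_eq_cube power4_eq_xxxx)
qed

definition t_harmonic_derivs :: "real \<Rightarrow> real \<Rightarrow> nat \<Rightarrow> real \<Rightarrow> real" where
  "t_harmonic_derivs w \<phi> j t =
     [t * sin (w * t + \<phi>),
      sin (w * t + \<phi>) + w * t * cos (w * t + \<phi>),
      2 * w * cos (w * t + \<phi>) - w\<^sup>2 * t * sin (w * t + \<phi>),
      - 3 * w\<^sup>2 * sin (w * t + \<phi>) - w ^ 3 * t * cos (w * t + \<phi>)] ! j"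

lemma t_harmonic_derivs_chain:
  "companion_chain UNIV (\<lambda>_. 1) (2 * w\<^sup>2) (w ^ 4) (t_harmonic_derivs w \<phi>)"
proof (rule companion_chainI)
  fix s and j :: nat assume "j < 3"
  hence "j = 0 \<or> j = 1 \<or> j = 2" by auto
  thus "(t_harmonic_derivs w \<phi> j has_real_derivative 1 * t_harmonic_derivs w \<phi> (Suc j) s) (at s)"
    unfolding t_harmonic_derivs_def
    by (elim disjE) (auto intro!: derivative_eq_intros simp: numeral_eq_Suc algebra_simps
        power2_eq_square power3_eq_cube)
next
  fix s
  show "(t_harmonic_derivs w \<phi> 3 has_real_derivative
      1 * (- (2 * w\<^sup>2) * t_harmonic_derivs w \<phi> 2 s - w ^ 4 * t_harmonic_derivs w \<phi> 0 s)) (at s)"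
    unfolding t_harmonic_derivs_def
    by (auto intro!: derivative_eq_intros simp: numeral_eq_Suc algebra_simps power2_eq_square
        power3_eq_cube power4_eq_xxxx)
qed

lemma fundamental_system_harmonic:
  assumes pq: "0 < p" "p < q"
  shows "fundamental_system (p\<^sup>2 + q\<^sup>2) (p\<^sup>2 * q\<^sup>2)
    (harmonic_derivs p 0) (harmonic_derivs q 0) (harmonic_derivs p (pi / 2)) (harmonic_derivs q (pi / 2))"
proof (rule fundamental_systemI)
  have "w ^ 4 - (p\<^sup>2 + q\<^sup>2) * w\<^sup>2 + p\<^sup>2 * q\<^sup>2 = (w\<^sup>2 - p\<^sup>2) * (w\<^sup>2 - q\<^sup>2)" for w
    by (simp add: algebra_simps power2_eq_square power4_eq_xxxx)
  hence "w ^ 4 - (p\<^sup>2 + q\<^sup>2) * w\<^sup>2 + p\<^sup>2 * q\<^sup>2 = 0" if "w = p \<or> w = q" for w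
    using that by auto
  note chain = harmonic_derivs_chain[OF this]
  show "companion_chain UNIV (\<lambda>_. 1) (p\<^sup>2 + q\<^sup>2) (p\<^sup>2 * q\<^sup>2) (harmonic_derivs p 0)"
    "companion_chain UNIV (\<lambda>_. 1) (p\<^sup>2 + q\<^sup>2) (p\<^sup>2 * q\<^sup>2) (harmonic_derivs q 0)"
    "companion_chain UNIV (\<lambda>_. 1) (p\<^sup>2 + q\<^sup>2) (p\<^sup>2 * q\<^sup>2) (harmonic_derivs p (pi / 2))"
    "companion_chain UNIV (\<lambda>_. 1) (p\<^sup>2 + q\<^sup>2) (p\<^sup>2 * q\<^sup>2) (harmonic_derivs q (pi / 2))"
    by (simp_all add: chain)
  fix c1 c2 c3 c4
  assume "\<And>j. j < 4 \<Longrightarrow> c1 * harmonic_derivs p 0 j 0 + c2 * harmonic_derivs q 0 j 0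
    + c3 * harmonic_derivs p (pi / 2) j 0 + c4 * harmonic_derivs q (pi / 2) j 0 = 0"
  from this[of 0] this[of 1] this[of 2] this[of 3]
  have e: "c3 + c4 = 0" "p * c1 + q * c2 = 0" "p\<^sup>2 * c3 + q\<^sup>2 * c4 = 0" "p ^ 3 * c1 + q ^ 3 * c2 = 0"
    by (simp_all add: harmonic_derivs_def numeral_eq_Suc algebra_simps)
  have pq2: "p\<^sup>2 \<noteq> q\<^sup>2" using pq power_strict_mono[of p q 2] by simp
  have "(q\<^sup>2 - p\<^sup>2) * c4 = 0" using e(1,3) by (simp add: algebra_simps eq_neg_iff_add_eq_0[symmetric])
  hence c4: "c4 = 0" using pq2 by simp
  have "p * (p\<^sup>2 - q\<^sup>2) * c1 = p ^ 3 * c1 + q ^ 3 * c2 - q\<^sup>2 * (p * c1 + q * c2)"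
    by (simp add: algebra_simps power2_eq_square power3_eq_cube)
  hence "c1 = 0" using e(2,4) pq pq2 by simp
  thus "c1 = 0 \<and> c2 = 0 \<and> c3 = 0 \<and> c4 = 0" using e(1,2) c4 pq by simp
qed

lemma fundamental_system_resonant:
  assumes w: "0 < w"
  shows "fundamental_system (2 * w\<^sup>2) (w ^ 4) (harmonic_derivs w 0) (harmonic_derivs w (pi / 2))
    (t_harmonic_derivs w 0) (t_harmonic_derivs w (pi / 2))"
proof (rule fundamental_systemI)
  have "w ^ 4 - 2 * w\<^sup>2 * w\<^sup>2 + w ^ 4 = 0" by (simp add: power2_eq_square power4_eq_xxxx)
  note chain = harmonic_derivs_chain[OF this] t_harmonic_derivs_chain
  show "companion_chain UNIV (\<lambda>_. 1) (2 * w\<^sup>2) (w ^ 4) (harmonic_derivs w 0)"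
    "companion_chain UNIV (\<lambda>_. 1) (2 * w\<^sup>2) (w ^ 4) (harmonic_derivs w (pi / 2))"
    "companion_chain UNIV (\<lambda>_. 1) (2 * w\<^sup>2) (w ^ 4) (t_harmonic_derivs w 0)"
    "companion_chain UNIV (\<lambda>_. 1) (2 * w\<^sup>2) (w ^ 4) (t_harmonic_derivs w (pi / 2))"
    by (simp_all add: chain)
  fix c1 c2 c3 c4
  assume "\<And>j. j < 4 \<Longrightarrow> c1 * harmonic_derivs w 0 j 0 + c2 * harmonic_derivs w (pi / 2) j 0
    + c3 * t_harmonic_derivs w 0 j 0 + c4 * t_harmonic_derivs w (pi / 2) j 0 = 0"
  from this[of 0] this[of 1] this[of 2] this[of 3]
  have e: "c2 = 0" "w * c1 + c4 = 0" "2 * w * c3 - w\<^sup>2 * c2 = 0" "w ^ 3 * c1 + 3 * w\<^sup>2 * c4 = 0"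
    by (simp_all add: harmonic_derivs_def t_harmonic_derivs_def numeral_eq_Suc algebra_simps)
  have "2 * w ^ 3 * c1 = 3 * w\<^sup>2 * (w * c1 + c4) - (w ^ 3 * c1 + 3 * w\<^sup>2 * c4)"
    by (simp add: algebra_simps power2_eq_square power3_eq_cube)
  hence "c1 = 0" using e(2,4) w by simp
  thus "c1 = 0 \<and> c2 = 0 \<and> c3 = 0 \<and> c4 = 0" using e w by simp
qed

definition trig_hyp_comb :: "real \<Rightarrow> real \<Rightarrow> real \<times> real \<times> real \<times> real \<Rightarrow> real \<Rightarrow> real" where
  "trig_hyp_comb \<alpha> \<beta> v t = (case v of (v1, v2, v3, v4) \<Rightarrow>
     v1 * (cos (\<alpha> * t) * sinh (\<beta> * t)) + v2 * (sin (\<alpha> * t) * cosh (\<beta> * t))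
     + v3 * (sin (\<alpha> * t) * sinh (\<beta> * t)) + v4 * (cos (\<alpha> * t) * cosh (\<beta> * t)))"

definition trig_hyp_deriv ::
  "real \<Rightarrow> real \<Rightarrow> real \<times> real \<times> real \<times> real \<Rightarrow> real \<times> real \<times> real \<times> real" where
  "trig_hyp_deriv \<alpha> \<beta> v = (case v of (v1, v2, v3, v4) \<Rightarrow>
     (\<alpha> * v3 + \<beta> * v4, \<beta> * v3 - \<alpha> * v4, \<beta> * v2 - \<alpha> * v1, \<beta> * v1 + \<alpha> * v2))"

lemma trig_hyp_comb_has_real_derivative:
  "(trig_hyp_comb \<alpha> \<beta> v has_real_derivative trig_hyp_comb \<alpha> \<beta> (trig_hyp_deriv \<alpha> \<beta> v) t) (at t)"
  by (cases v) (auto simp: trig_hyp_comb_def[abs_def] trig_hyp_deriv_def algebra_simps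
      intro!: derivative_eq_intros)

definition trig_hyp_derivs :: "real \<Rightarrow> real \<Rightarrow> real \<times> real \<times> real \<times> real \<Rightarrow> nat \<Rightarrow> real \<Rightarrow> real" where
  "trig_hyp_derivs \<alpha> \<beta> v j = trig_hyp_comb \<alpha> \<beta> ((trig_hyp_deriv \<alpha> \<beta> ^^ j) v)"

lemma trig_hyp_derivs_chain:
  "companion_chain UNIV (\<lambda>_. 1) (2 * (\<alpha>\<^sup>2 - \<beta>\<^sup>2)) ((\<alpha>\<^sup>2 + \<beta>\<^sup>2)\<^sup>2) (trig_hyp_derivs \<alpha> \<beta> v)"
proof (rule companion_chainI)
  fix s and j :: nat
  show "(trig_hyp_derivs \<alpha> \<beta> v j has_real_derivative 1 * trig_hyp_derivs \<alpha> \<beta> v (Suc j) s) (at s)"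
    using trig_hyp_comb_has_real_derivative by (simp add: trig_hyp_derivs_def)
next
  fix s
  have "trig_hyp_derivs \<alpha> \<beta> v 4 s = - (2 * (\<alpha>\<^sup>2 - \<beta>\<^sup>2)) * trig_hyp_derivs \<alpha> \<beta> v 2 s
      - (\<alpha>\<^sup>2 + \<beta>\<^sup>2)\<^sup>2 * trig_hyp_derivs \<alpha> \<beta> v 0 s"
    by (cases v) (simp add: trig_hyp_derivs_def trig_hyp_comb_def trig_hyp_deriv_def numeral_eq_Suc
        algebra_simps power2_eq_square)
  moreover have "(trig_hyp_derivs \<alpha> \<beta> v 3 has_real_derivative trig_hyp_derivs \<alpha> \<beta> v 4 s) (at s)"
    using trig_hyp_comb_has_real_derivative by (simp add: trig_hyp_derivs_def numeral_eq_Suc)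
  ultimately show "(trig_hyp_derivs \<alpha> \<beta> v 3 has_real_derivative 1 * (- (2 * (\<alpha>\<^sup>2 - \<beta>\<^sup>2)) *
      trig_hyp_derivs \<alpha> \<beta> v 2 s - (\<alpha>\<^sup>2 + \<beta>\<^sup>2)\<^sup>2 * trig_hyp_derivs \<alpha> \<beta> v 0 s)) (at s)"
    by simp
qed

lemma fundamental_system_trig_hyp:
  assumes \<alpha>: "0 < \<alpha>" and \<beta>: "0 < \<beta>"
  shows "fundamental_system (2 * (\<alpha>\<^sup>2 - \<beta>\<^sup>2)) ((\<alpha>\<^sup>2 + \<beta>\<^sup>2)\<^sup>2)
    (trig_hyp_derivs \<alpha> \<beta> (1, 0, 0, 0)) (trig_hyp_derivs \<alpha> \<beta> (0, 1, 0, 0))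
    (trig_hyp_derivs \<alpha> \<beta> (0, 0, 1, 0)) (trig_hyp_derivs \<alpha> \<beta> (0, 0, 0, 1))"
proof (rule fundamental_systemI; (rule trig_hyp_derivs_chain)?)
  fix c1 c2 c3 c4
  assume "\<And>j. j < 4 \<Longrightarrow> c1 * trig_hyp_derivs \<alpha> \<beta> (1, 0, 0, 0) j 0 + c2 * trig_hyp_derivs \<alpha> \<beta> (0, 1, 0, 0) j 0
    + c3 * trig_hyp_derivs \<alpha> \<beta> (0, 0, 1, 0) j 0 + c4 * trig_hyp_derivs \<alpha> \<beta> (0, 0, 0, 1) j 0 = 0"
  from this[of 0] this[of 1] this[of 2] this[of 3]
  have e: "c4 = 0" "\<beta> * c1 + \<alpha> * c2 = 0" "2 * \<alpha> * \<beta> * c3 + (\<beta>\<^sup>2 - \<alpha>\<^sup>2) * c4 = 0"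
    "(\<beta> ^ 3 - 3 * \<alpha>\<^sup>2 * \<beta>) * c1 + (3 * \<alpha> * \<beta>\<^sup>2 - \<alpha> ^ 3) * c2 = 0"
    by (simp_all add: trig_hyp_derivs_def trig_hyp_comb_def trig_hyp_deriv_def numeral_eq_Suc
        algebra_simps power2_eq_square power3_eq_cube)
  have "- 2 * \<beta> * (\<alpha>\<^sup>2 + \<beta>\<^sup>2) * (\<alpha> * c1) = \<alpha> * ((\<beta> ^ 3 - 3 * \<alpha>\<^sup>2 * \<beta>) * c1 + (3 * \<alpha> * \<beta>\<^sup>2 - \<alpha> ^ 3) * c2)
      - (3 * \<alpha> * \<beta>\<^sup>2 - \<alpha> ^ 3) * (\<beta> * c1 + \<alpha> * c2)"
    by (simp add: algebra_simps power2_eq_square power3_eq_cube)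
  moreover have "0 < \<alpha>\<^sup>2 + \<beta>\<^sup>2" using \<alpha> by (simp add: add_pos_nonneg)
  ultimately have "c1 = 0" using e(2,4) \<alpha> \<beta> by simp
  thus "c1 = 0 \<and> c2 = 0 \<and> c3 = 0 \<and> c4 = 0" using e \<alpha> \<beta> by simp
qed

lemma general_solution_basis_subcritical:
  fixes x0 L mu :: real
  assumes x0L: "0 < 3 * x0" "3 * x0 < L" and mu: "0 < mu" "mu < mu0 x0 L"
  defines "a \<equiv> x0 / (L + x0)"
  defines "\<alpha> \<equiv> sqrt (mu + a + 2 * sqrt a) / 2" and "\<beta> \<equiv> sqrt (- mu - a + 2 * sqrt a) / 2"
  shows "general_solution_basis x0 L mu
    (\<lambda>t. cos (\<alpha> * t) * sinh (\<beta> * t)) (\<lambda>t. sin (\<alpha> * t) * cosh (\<beta> * t))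
    (\<lambda>t. sin (\<alpha> * t) * sinh (\<beta> * t)) (\<lambda>t. cos (\<alpha> * t) * cosh (\<beta> * t))"
proof -
  have a: "0 < a" using critical_ratio_bounds[OF x0L] by (simp add: a_def)
  have "mu + a < 2 * sqrt a" using mu(2) by (simp add: mu0_def a_def)
  hence \<alpha>\<beta>: "\<alpha>\<^sup>2 = (mu + a + 2 * sqrt a) / 4" "\<beta>\<^sup>2 = (- mu - a + 2 * sqrt a) / 4" "0 < \<alpha>" "0 < \<beta>"
    using mu(1) a by (simp_all add: \<alpha>_def \<beta>_def power_divide add_pos_pos)
  have sum: "\<alpha>\<^sup>2 + \<beta>\<^sup>2 = sqrt a" and diff: "\<alpha>\<^sup>2 - \<beta>\<^sup>2 = (mu + a) / 2"
    using \<alpha>\<beta>(1,2) by (simp_all add: field_simps)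
  have "mu + a = 2 * (\<alpha>\<^sup>2 - \<beta>\<^sup>2)" "a = (\<alpha>\<^sup>2 + \<beta>\<^sup>2)\<^sup>2"
    unfolding sum diff using a by simp_all
  with fundamental_system_trig_hyp[OF \<alpha>\<beta>(3,4)]
  have "general_solution_basis x0 L mu
    (trig_hyp_derivs \<alpha> \<beta> (1, 0, 0, 0) 0) (trig_hyp_derivs \<alpha> \<beta> (0, 1, 0, 0) 0)
    (trig_hyp_derivs \<alpha> \<beta> (0, 0, 1, 0) 0) (trig_hyp_derivs \<alpha> \<beta> (0, 0, 0, 1) 0)"
    by (intro general_solution_basisI[OF x0L]) (simp add: a_def)
  thus ?thesis by (simp add: trig_hyp_derivs_def trig_hyp_comb_def[abs_def])
qed

lemma general_solution_basis_critical:
  fixes x0 L mu :: real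
  assumes x0L: "0 < 3 * x0" "3 * x0 < L" and mu: "mu = mu0 x0 L"
  defines "a \<equiv> x0 / (L + x0)"
  defines "\<alpha> \<equiv> sqrt (mu + a + 2 * sqrt a) / 2"
  shows "general_solution_basis x0 L mu
    (\<lambda>t. sin (\<alpha> * t)) (\<lambda>t. cos (\<alpha> * t)) (\<lambda>t. t * sin (\<alpha> * t)) (\<lambda>t. t * cos (\<alpha> * t))"
proof -
  have a: "0 < a" using critical_ratio_bounds[OF x0L] by (simp add: a_def)
  have "mu + a = 2 * sqrt a" using mu by (simp add: mu0_def a_def)
  hence \<alpha>: "\<alpha>\<^sup>2 = sqrt a" "0 < \<alpha>" using a by (simp_all add: \<alpha>_def power_divide)
  have "\<alpha> ^ 4 = (\<alpha>\<^sup>2)\<^sup>2" by (simp flip: power_mult)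
  also have "\<dots> = a" using \<alpha>(1) a by simp
  finally have "mu + a = 2 * \<alpha>\<^sup>2" "a = \<alpha> ^ 4" using \<alpha>(1) \<open>mu + a = 2 * sqrt a\<close> by simp_all
  with fundamental_system_resonant[OF \<alpha>(2)]
  have "general_solution_basis x0 L mu (harmonic_derivs \<alpha> 0 0) (harmonic_derivs \<alpha> (pi / 2) 0)
    (t_harmonic_derivs \<alpha> 0 0) (t_harmonic_derivs \<alpha> (pi / 2) 0)"
    by (intro general_solution_basisI[OF x0L]) (simp add: a_def)
  thus ?thesis by (simp add: harmonic_derivs_def[abs_def] t_harmonic_derivs_def[abs_def] sin_add)
qed

lemma general_solution_basis_supercritical:
  fixes x0 L mu :: real
  assumes x0L: "0 < 3 * x0" "3 * x0 < L" and mu: "mu > mu0 x0 L"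
  defines "a \<equiv> x0 / (L + x0)"
  defines "\<alpha> \<equiv> sqrt (mu + a + 2 * sqrt a) / 2" and "\<gamma> \<equiv> sqrt (mu + a - 2 * sqrt a) / 2"
  shows "general_solution_basis x0 L mu
    (\<lambda>t. sin ((\<alpha> - \<gamma>) * t)) (\<lambda>t. sin ((\<alpha> + \<gamma>) * t))
    (\<lambda>t. cos ((\<alpha> - \<gamma>) * t)) (\<lambda>t. cos ((\<alpha> + \<gamma>) * t))"
proof -
  have a: "0 < a" using critical_ratio_bounds[OF x0L] by (simp add: a_def)
  have "2 * sqrt a < mu + a" using mu by (simp add: mu0_def a_def)
  moreover have "0 \<le> sqrt a" using a by simp
  ultimately have nonneg: "0 \<le> mu + a + 2 * sqrt a" "0 \<le> mu + a - 2 * sqrt a" by linarith+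
  hence \<alpha>\<gamma>: "\<alpha>\<^sup>2 = (mu + a + 2 * sqrt a) / 4" "\<gamma>\<^sup>2 = (mu + a - 2 * sqrt a) / 4"
    by (simp_all add: \<alpha>_def \<gamma>_def power_divide)
  have "0 < \<gamma>" using \<open>2 * sqrt a < mu + a\<close> by (simp add: \<gamma>_def)
  have sum: "\<alpha>\<^sup>2 + \<gamma>\<^sup>2 = (mu + a) / 2" and diff: "\<alpha>\<^sup>2 - \<gamma>\<^sup>2 = sqrt a"
    using \<alpha>\<gamma>(1,2) by (simp_all add: field_simps)
  have "0 < sqrt a" using a by simp
  hence "\<gamma>\<^sup>2 < \<alpha>\<^sup>2" using diff by linarith
  hence "\<gamma> < \<alpha>" by (rule power_less_imp_less_base) (simp add: \<alpha>_def nonneg)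
  have "mu + a = (\<alpha> - \<gamma>)\<^sup>2 + (\<alpha> + \<gamma>)\<^sup>2"
  proof -
    have "(\<alpha> - \<gamma>)\<^sup>2 + (\<alpha> + \<gamma>)\<^sup>2 = 2 * (\<alpha>\<^sup>2 + \<gamma>\<^sup>2)" by (simp add: algebra_simps power2_eq_square)
    thus ?thesis unfolding sum by simp
  qed
  moreover have "a = (\<alpha> - \<gamma>)\<^sup>2 * (\<alpha> + \<gamma>)\<^sup>2"
  proof -
    have "(\<alpha> - \<gamma>)\<^sup>2 * (\<alpha> + \<gamma>)\<^sup>2 = (\<alpha>\<^sup>2 - \<gamma>\<^sup>2)\<^sup>2" by (simp add: algebra_simps power2_eq_square)
    thus ?thesis unfolding diff using a by simp
  qed
  ultimately have "fundamental_system (mu + a) a (harmonic_derivs (\<alpha> - \<gamma>) 0) (harmonic_derivs (\<alpha> + \<gamma>) 0)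
    (harmonic_derivs (\<alpha> - \<gamma>) (pi / 2)) (harmonic_derivs (\<alpha> + \<gamma>) (pi / 2))"
    using fundamental_system_harmonic[of "\<alpha> - \<gamma>" "\<alpha> + \<gamma>"] \<open>\<gamma> < \<alpha>\<close> \<open>0 < \<gamma>\<close> by simp
  from general_solution_basisI[OF x0L this[unfolded a_def]]
  show ?thesis by (simp add: harmonic_derivs_def[abs_def] sin_add)
qed

theorem mainTheorem16:
  fixes x0 L mu :: real
  assumes "0 < 3 * x0" and "3 * x0 < L" and "0 < mu"
  defines "a \<equiv> x0 / (L + x0)"
  defines "\<alpha> \<equiv> sqrt (mu + a + 2 * sqrt a) / 2"
  defines "\<beta> \<equiv> sqrt (- mu - a + 2 * sqrt a) / 2"
  defines "\<gamma> \<equiv> sqrt (mu + a - 2 * sqrt a) / 2"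
  shows
    "(mu < mu0 x0 L \<longrightarrow> general_solution_basis x0 L mu
        (\<lambda>t. cos (\<alpha> * t) * sinh (\<beta> * t)) (\<lambda>t. sin (\<alpha> * t) * cosh (\<beta> * t))
        (\<lambda>t. sin (\<alpha> * t) * sinh (\<beta> * t)) (\<lambda>t. cos (\<alpha> * t) * cosh (\<beta> * t)))
     \<and> (mu = mu0 x0 L \<longrightarrow> general_solution_basis x0 L mu
        (\<lambda>t. sin (\<alpha> * t)) (\<lambda>t. cos (\<alpha> * t))
        (\<lambda>t. t * sin (\<alpha> * t)) (\<lambda>t. t * cos (\<alpha> * t)))
     \<and> (mu > mu0 x0 L \<longrightarrow> general_solution_basis x0 L mu
        (\<lambda>t. sin ((\<alpha> - \<gamma>) * t)) (\<lambda>t. sin ((\<alpha> + \<gamma>) * t))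
        (\<lambda>t. cos ((\<alpha> - \<gamma>) * t)) (\<lambda>t. cos ((\<alpha> + \<gamma>) * t)))"
  using general_solution_basis_subcritical[OF assms(1-3)] general_solution_basis_critical[OF assms(1,2)]
    general_solution_basis_supercritical[OF assms(1,2)]
  unfolding a_def \<alpha>_def \<beta>_def \<gamma>_def by blast

end
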